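(* Let $f,g_1,\ldots,g_m\in\mathbb R[\mathbf x]$, $\mathbf x=(x_1,\ldots,x_n)$, satisfy the Sparsity Assumption and the Compactness/Generation Assumption (a) below, and let $\mathbf K=\{\mathbf x\in\mathbb R^n: 0\le g_j(\mathbf x)\le 1,\ j=1,\ldots,m\}$. If $f(\mathbf x)>0$ for all $\mathbf x\in\mathbf K$, then there exist polynomials $f^\ell\in\mathbb R[\mathbf x;I_\ell]$, $\ell=1,\ldots,p$, with $f=\sum_{\ell=1}^p f^\ell$, and for each $\ell$ finitely many positive reals $c^\ell_{\alpha\beta}$, $(\alpha,\beta)\in N^\ell$, such that \[ f^\ell=\sum_{(\alpha,\beta)\in N^\ell} c^\ell_{\alpha\beta}\,h_{\alpha\beta},\qquad \ell=1,\ldots,p. \]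
   Context: For $I\subseteq\{1,\ldots,n\}$, $\mathbb R[\mathbf x;I]$ denotes the subring of $\mathbb R[\mathbf x]$ of polynomials in the variables $\{x_i:i\in I\}$ only. For $\alpha,\beta\in\mathbb N_0^m$, $h_{\alpha\beta}:=\prod_{j=1}^m g_j^{\alpha_j}(1-g_j)^{\beta_j}$. For $\alpha\in\mathbb N_0^m$, $\mathrm{supp}(\alpha)=\{j:\alpha_j\neq 0\}$. Sparsity Assumption: there are $p\in\mathbb N$ and sets $I_\ell\subseteq\{1,\ldots,n\}$, $J_\ell\subseteq\{1,\ldots,m\}$ ($\ell=1,\ldots,p$) such that: $f=\sum_{\ell=1}^p f^\ell$ for some $f^\ell\in\mathbb R[\mathbf x;I_\ell]$; $g_j\in\mathbb R[\mathbf x;I_\ell]$ for all $j\in J_\ell$; $\bigcup_\ell I_\ell=\{1,\ldots,n\}$; $\bigcup_\ell J_\ell=\{1,\ldots,m\}$; and (running intersection property) for every $\ell=1,\ldots,p-1$ there is $s\le \ell$ with $I_{\ell+1}\cap\bigcup_{r=1}^{\ell}I_r\subseteq I_s$. With $n_\ell=|I_\ell|$, let $\mathbf K_\ell=\{\mathbf z\in\mathbb R^{n_\ell}:0\le g_j(\mathbf z)\le 1,\ j\in J_\ell\}$ (each $g_j$, $j\in J_\ell$, viewed as a function of the variables indexed by $I_\ell$). Compactness/Generation Assumption (a): for each $\ell$, $\mathbf K_\ell$ is compact and the polynomials $1$ and $(g_j)_{j\in J_\ell}$ generate $\mathbb R[\mathbf x;I_\ell]$ as an $\mathbb R$-algebra.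 $N^\ell:=\{(\alpha,\beta)\in\mathbb N_0^m\times\mathbb N_0^m:\mathrm{supp}(\alpha)\cup\mathrm{supp}(\beta)\subseteq J_\ell\}$. *)

theory Defs
  imports "HOL-Analysis.Analysis"
begin

(* Points of R^n are represented as functions nat => real (coordinates x 1, ..., x n);
   polynomials are represented by the polynomial functions they induce
   (the map R[x] -> functions is injective since R is infinite). *)

type_synonym pt = "nat \<Rightarrow> real"

inductive_set alg_gen :: "(pt \<Rightarrow> real) set \<Rightarrow> (pt \<Rightarrow> real) set"
  for G :: "(pt \<Rightarrow> real) set" where
  const: "(\<lambda>x. c) \<in> alg_gen G"
| gen: "q \<in> G \<Longrightarrow> q \<in> alg_gen G"
| add: "p \<in> alg_gen G \<Longrightarrow> q \<in> alg_gen G \<Longrightarrow> (\<lambda>x. p x + q x) \<in> alg_gen G"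
| mult: "p \<in> alg_gen G \<Longrightarrow> q \<in> alg_gen G \<Longrightarrow> (\<lambda>x. p x * q x) \<in> alg_gen G"

definition poly_in :: "nat set \<Rightarrow> (pt \<Rightarrow> real) set" where
  "poly_in I = alg_gen ((\<lambda>i. \<lambda>x. x i) ` I)"

definition h_ab :: "nat \<Rightarrow> (nat \<Rightarrow> pt \<Rightarrow> real) \<Rightarrow> (nat \<Rightarrow> nat) \<Rightarrow> (nat \<Rightarrow> nat) \<Rightarrow> pt \<Rightarrow> real" where
  "h_ab m g \<alpha> \<beta> x = (\<Prod>j\<in>{1..m}. g j x ^ \<alpha> j * (1 - g j x) ^ \<beta> j)"

definition supp_idx :: "(nat \<Rightarrow> nat) \<Rightarrow> nat set" where
  "supp_idx \<alpha> = {j. \<alpha> j \<noteq> 0}"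

definition N_set :: "nat set \<Rightarrow> ((nat \<Rightarrow> nat) \<times> (nat \<Rightarrow> nat)) set" where
  "N_set J = {(\<alpha>, \<beta>). supp_idx \<alpha> \<union> supp_idx \<beta> \<subseteq> J}"

(* K_l, viewed inside R^n with coordinates outside I_l set to 0 (homeomorphic to the
   subset of R^{n_l}) *)
definition K_loc :: "nat set \<Rightarrow> nat set \<Rightarrow> (nat \<Rightarrow> pt \<Rightarrow> real) \<Rightarrow> pt set" where
  "K_loc I J g = {z. (\<forall>i. i \<notin> I \<longrightarrow> z i = 0) \<and> (\<forall>j\<in>J. 0 \<le> g j z \<and> g j z \<le> 1)}"

definition K_glob :: "nat \<Rightarrow> nat \<Rightarrow> (nat \<Rightarrow> pt \<Rightarrow> real) \<Rightarrow> pt set" where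
  "K_glob n m g = {x. (\<forall>i. i \<notin> {1..n} \<longrightarrow> x i = 0) \<and> (\<forall>j\<in>{1..m}. 0 \<le> g j x \<and> g j x \<le> 1)}"

end

theory Submission
  imports Defs
begin

text \<open>
  On a single clique the generators \<open>g\<^sub>j\<close> are coordinates: every polynomial in the variables
  \<open>I\<^sub>l\<close> is a polynomial \<open>F\<close> in \<open>y\<^sub>j = g\<^sub>j x\<close>. Adding a large multiple of a penalty that vanishes
  on the image of \<open>g\<close> makes \<open>F\<close> positive on the whole unit cube, where Handelman's theorem
  (via a Bernstein expansion of high degree) writes it with positive coefficients in the products
  \<open>y\<^sup>\<alpha> (1 - y)\<^sup>\<beta>\<close>; substituting \<open>y = g x\<close> gives the \<open>h\<^sub>\<alpha>\<^sub>\<beta>\<close>.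

  To reach a decomposition \<open>f = \<Sum> f\<^sup>l\<close> with each \<open>f\<^sup>l\<close> positive on its own \<open>K\<^sub>l\<close>, the cliques are
  added one at a time. If \<open>f\<^sub>1 + f\<^sub>2 > 0\<close> on the glued set, a partition of unity produces a
  continuous function \<open>\<phi>\<close> of the common variables with \<open>-f\<^sub>2 < \<phi> < f\<^sub>1\<close>, and Stone-Weierstrass
  replaces it by a polynomial \<open>h\<close> in these variables; by the running intersection property \<open>h\<close>
  can be absorbed into a single earlier clique.
\<close>

section \<open>Polynomial functions in a set of variables\<close>

lemma alg_gen_mono: "G \<subseteq> H \<Longrightarrow> alg_gen G \<subseteq> alg_gen H"
proof
  fix q assume "G \<subseteq> H" and "q \<in> alg_gen G"
  from this(2) show "q \<in> alg_gen H"
    by induction (use \<open>G \<subseteq> H\<close> in \<open>auto intro: alg_gen.intros\<close>)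
qed

lemma poly_in_mono: "A \<subseteq> B \<Longrightarrow> poly_in A \<subseteq> poly_in B"
  unfolding poly_in_def by (rule alg_gen_mono) auto

lemma poly_in_coord: "i \<in> A \<Longrightarrow> (\<lambda>x. x i) \<in> poly_in A"
  unfolding poly_in_def by (rule alg_gen.gen) auto

lemma alg_gen_cmult: "p \<in> alg_gen G \<Longrightarrow> (\<lambda>x. c * p x) \<in> alg_gen G"
  using alg_gen.mult[OF alg_gen.const] by blast

lemma alg_gen_diff: "p \<in> alg_gen G \<Longrightarrow> q \<in> alg_gen G \<Longrightarrow> (\<lambda>x. p x - q x) \<in> alg_gen G"
  using alg_gen.add[OF _ alg_gen_cmult, of p G q "-1"] by simp

lemma alg_gen_sum:
  "finite S \<Longrightarrow> (\<And>s. s \<in> S \<Longrightarrow> F s \<in> alg_gen G) \<Longrightarrow> (\<lambda>x. \<Sum>s\<in>S. F s x) \<in> alg_gen G"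
proof (induction S rule: finite_induct)
  case empty
  then show ?case using alg_gen.const[of 0] by simp
next
  case (insert a S)
  then show ?case using alg_gen.add[of "F a" G "\<lambda>x. \<Sum>s\<in>S. F s x"] by simp
qed

lemma alg_gen_power: "p \<in> alg_gen G \<Longrightarrow> (\<lambda>x. p x ^ k) \<in> alg_gen G"
proof (induction k)
  case 0
  then show ?case using alg_gen.const[of 1] by simp
next
  case (Suc k)
  then show ?case using alg_gen.mult[of p G "\<lambda>x. p x ^ k"] by simp
qed

lemma continuous_on_alg_gen:
  "q \<in> alg_gen G \<Longrightarrow> (\<And>p. p \<in> G \<Longrightarrow> continuous_on S p) \<Longrightarrow> continuous_on S q"
  by (induction rule: alg_gen.induct) (auto intro!: continuous_intros)

lemma continuous_on_poly_in: "q \<in> poly_in A \<Longrightarrow> continuous_on S q"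
  unfolding poly_in_def
  by (erule continuous_on_alg_gen) (auto intro: continuous_on_subset[OF continuous_on_product_coordinates])

lemma poly_in_cong: "q \<in> poly_in A \<Longrightarrow> (\<And>i. i \<in> A \<Longrightarrow> x i = y i) \<Longrightarrow> q x = q y"
  unfolding poly_in_def by (induction rule: alg_gen.induct) auto

lemma poly_in_compose:
  assumes "q \<in> poly_in I" "\<And>i. i \<in> I \<Longrightarrow> P i \<in> poly_in J"
  shows "(\<lambda>y. q (\<lambda>i. if i \<in> I then P i y else 0)) \<in> poly_in J"
  using assms(1) unfolding poly_in_def
proof (induction rule: alg_gen.induct)
  case (gen q)
  then show ?case using assms(2) unfolding poly_in_def by auto
qed (auto intro: alg_gen.intros)

lemma alg_gen_image_eq_compose:
  assumes "q \<in> alg_gen (g ` J)"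
  shows "\<exists>F\<in>poly_in J. \<forall>x. q x = F (\<lambda>j. g j x)"
  using assms
proof (induction rule: alg_gen.induct)
  case (const c)
  show ?case unfolding poly_in_def by (auto intro: alg_gen.const)
next
  case (gen q)
  then show ?case by (auto intro: poly_in_coord)
next
  case (add p q)
  then obtain P Q where "P \<in> poly_in J" "Q \<in> poly_in J" "\<forall>x. p x = P (\<lambda>j. g j x)" "\<forall>x. q x = Q (\<lambda>j. g j x)"
    by blast
  then show ?case unfolding poly_in_def by (intro bexI[of _ "\<lambda>y. P y + Q y"]) (auto intro: alg_gen.add)
next
  case (mult p q)
  then obtain P Q where "P \<in> poly_in J" "Q \<in> poly_in J" "\<forall>x. p x = P (\<lambda>j. g j x)" "\<forall>x. q x = Q (\<lambda>j. g j x)"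
    by blast
  then show ?case unfolding poly_in_def by (intro bexI[of _ "\<lambda>y. P y * Q y"]) (auto intro: alg_gen.mult)
qed

lemma compact_coordinate_box:
  fixes S :: "'i \<Rightarrow> 'a::topological_space set"
  assumes "\<And>i. compact (S i)"
  shows "compact {x. \<forall>i. x i \<in> S i}"
proof -
  have "compactin (product_topology (\<lambda>i. euclidean) UNIV) (PiE UNIV S)"
    using assms by (simp add: compactin_PiE)
  moreover have "PiE UNIV S = {x. \<forall>i. x i \<in> S i}"
    by (auto simp: PiE_def Pi_def)
  ultimately show ?thesis
    by (simp add: euclidean_product_topology)
qed

definition restr :: "nat set \<Rightarrow> pt \<Rightarrow> pt" where
  "restr A x = (\<lambda>i. if i \<in> A then x i else 0)"

lemma continuous_on_restr: "continuous_on S (restr A)"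
  unfolding restr_def
proof (intro continuous_on_coordinatewise_then_product)
  fix i
  show "continuous_on S (\<lambda>x::pt. if i \<in> A then x i else 0)"
    by (cases "i \<in> A") (auto intro: continuous_on_subset[OF continuous_on_product_coordinates])
qed

lemma poly_in_restr: "q \<in> poly_in A \<Longrightarrow> q (restr A x) = q x"
  by (rule poly_in_cong) (auto simp: restr_def)

lemma restr_eq_iff: "restr A x = restr A z \<longleftrightarrow> (\<forall>i\<in>A. x i = z i)"
  by (auto simp: restr_def fun_eq_iff)

lemma closed_K_loc:
  assumes "\<And>j. j \<in> J \<Longrightarrow> continuous_on UNIV (g j)"
  shows "closed (K_loc I J g)"
proof -
  have "K_loc I J g = (\<Inter>i\<in>-I. {x. x i = 0}) \<inter> (\<Inter>j\<in>J. {x. 0 \<le> g j x} \<inter> {x. g j x \<le> 1})"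
    unfolding K_loc_def by auto
  moreover have "closed (\<Inter>i\<in>-I. {x::pt. x i = 0})"
    by (intro closed_INT ballI closed_Collect_eq continuous_on_product_coordinates continuous_on_const)
  moreover have "closed (\<Inter>j\<in>J. {x. 0 \<le> g j x} \<inter> {x. g j x \<le> 1})"
    using assms by (intro closed_INT ballI closed_Int closed_Collect_le continuous_on_const) auto
  ultimately show ?thesis
    by auto
qed

lemma compact_pos_imp_uniformly_pos:
  fixes u :: "'a::topological_space \<Rightarrow> real"
  assumes "compact K" "continuous_on K u" "\<forall>x\<in>K. 0 < u x"
  shows "\<exists>\<delta>>0. \<forall>x\<in>K. \<delta> \<le> u x"
proof (cases "K = {}")
  case False
  then obtain x0 where "x0 \<in> K" "\<forall>x\<in>K. u x0 \<le> u x"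
    using continuous_attains_inf[OF assms(1) False assms(2)] by blast
  then show ?thesis
    using assms(3) by blast
qed (auto intro: exI[of _ 1])

lemma compact_real_sets_separated:
  fixes A B :: "real set"
  assumes "compact A" "compact B" "\<forall>a\<in>A. \<forall>b\<in>B. b < a"
  shows "\<exists>t. (\<forall>a\<in>A. t < a) \<and> (\<forall>b\<in>B. b < t)"
proof (cases "A = {}"; cases "B = {}")
  assume "A \<noteq> {}" "B \<noteq> {}"
  then obtain a0 b0 where "a0 \<in> A" "\<forall>a\<in>A. a0 \<le> a" "b0 \<in> B" "\<forall>b\<in>B. b \<le> b0"
    using compact_attains_inf compact_attains_sup assms(1,2) by metis
  then show ?thesis
    using assms(3) by (intro exI[of _ "(a0 + b0) / 2"]) force
next
  assume "A \<noteq> {}" "B = {}"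
  then obtain a0 where "a0 \<in> A" "\<forall>a\<in>A. a0 \<le> a"
    using compact_attains_inf assms(1) by metis
  then show ?thesis
    using \<open>B = {}\<close> by (intro exI[of _ "a0 - 1"]) force
next
  assume "A = {}" "B \<noteq> {}"
  then obtain b0 where "b0 \<in> B" "\<forall>b\<in>B. b \<le> b0"
    using compact_attains_sup assms(2) by metis
  then show ?thesis
    using \<open>A = {}\<close> by (intro exI[of _ "b0 + 1"]) force
qed auto

section \<open>Bernstein coefficients of monomials\<close>

definition Bernstein_coeff :: "nat \<Rightarrow> nat \<Rightarrow> nat \<Rightarrow> real" where
  "Bernstein_coeff d a i = real (i choose a) / real (d choose a)"

lemma power_eq_sum_Bernstein:
  fixes t :: real
  assumes "a \<le> d"
  shows "t ^ a = (\<Sum>i\<le>d. Bernstein_coeff d a i * Bernstein d i t)"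
proof -
  have summand: "Bernstein_coeff d a i * Bernstein d i t =
      (if a \<le> i then real ((d - a) choose (i - a)) * t ^ i * (1 - t) ^ (d - i) else 0)"
    if "i \<le> d" for i
  proof (cases "a \<le> i")
    case True
    have "real (d choose i) * real (i choose a) = real (d choose a) * real ((d - a) choose (i - a))"
      using choose_mult[OF True that] by (metis of_nat_mult)
    then show ?thesis
      using True assms by (simp add: Bernstein_coeff_def Bernstein_def field_simps)
  qed (simp add: Bernstein_coeff_def)
  have "(\<Sum>i\<le>d. Bernstein_coeff d a i * Bernstein d i t)
      = (\<Sum>i=a..d. real ((d - a) choose (i - a)) * t ^ i * (1 - t) ^ (d - i))"
    using assms by (simp add: summand atLeast0AtMost[symmetric] sum.If_cases) (rule sum.cong; auto)
  also have "\<dots> = (\<Sum>k\<le>d-a. real ((d - a) choose k) * t ^ (k + a) * (1 - t) ^ (d - a - k))"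
    using assms sum.shift_bounds_cl_nat_ivl[of "\<lambda>i. real ((d - a) choose (i - a)) * t ^ i * (1 - t) ^ (d - i)" 0 a "d - a"]
    by (simp add: atLeast0AtMost[symmetric] algebra_simps)
  also have "\<dots> = t ^ a * (\<Sum>k\<le>d-a. real ((d - a) choose k) * t ^ k * (1 - t) ^ (d - a - k))"
    by (simp add: sum_distrib_left power_add algebra_simps)
  also have "\<dots> = t ^ a * (t + (1 - t)) ^ (d - a)"
    by (simp only: binomial_ring)
  finally show ?thesis
    by simp
qed

lemma Bernstein_coeff_nonneg: "0 \<le> Bernstein_coeff d a i"
  by (simp add: Bernstein_coeff_def)

lemma Bernstein_coeff_le_1: "i \<le> d \<Longrightarrow> Bernstein_coeff d a i \<le> 1"
  using binomial_right_mono[of i d a] by (auto simp: Bernstein_coeff_def divide_le_eq_1)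

lemma Bernstein_coeff_Suc:
  assumes "a < d"
  shows "Bernstein_coeff d (Suc a) i = Bernstein_coeff d a i * ((real i - real a) / (real d - real a))"
proof (cases "a \<le> i")
  case True
  have choose_Suc: "real (k choose Suc a) * real (Suc a) = real (k choose a) * (real k - real a)"
    if "a \<le> k" for k
    using that by (metis binomial_absorb_comp binomial_absorption mult.commute of_nat_diff of_nat_mult)
  have "Bernstein_coeff d (Suc a) i
      = (real (i choose Suc a) * real (Suc a)) / (real (d choose Suc a) * real (Suc a))"
    by (simp add: Bernstein_coeff_def)
  also have "\<dots> = (real (i choose a) * (real i - real a)) / (real (d choose a) * (real d - real a))"
    using choose_Suc[of i] choose_Suc[of d] True assms by simp
  finally show ?thesis
    by (simp add: Bernstein_coeff_def)
qed (simp add: Bernstein_coeff_def binomial_eq_0)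

lemma Bernstein_coeff_approx:
  assumes "a \<le> d" "i \<le> d" "0 < d"
  shows "\<bar>Bernstein_coeff d a i - (real i / real d) ^ a\<bar> \<le> real a ^ 2 / real d"
  using assms(1)
proof (induction a)
  case (Suc a)
  define u v s w where "u = Bernstein_coeff d a i" and "v = (real i / real d) ^ a"
    and "s = (real i - real a) / (real d - real a)" and "w = real i / real d"
  have IH: "\<bar>u - v\<bar> \<le> real a ^ 2 / real d"
    using Suc unfolding u_def v_def by simp
  have w: "0 \<le> w" "w \<le> 1" and v: "0 \<le> v" "v \<le> 1"
    using assms unfolding v_def w_def by (auto intro: power_le_one)
  have u: "0 \<le> u" "u \<le> 1"
    unfolding u_def using assms by (auto intro: Bernstein_coeff_nonneg Bernstein_coeff_le_1)
  have eq: "Bernstein_coeff d (Suc a) i = u * s" "(real i / real d) ^ Suc a = v * w"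
    using Bernstein_coeff_Suc Suc.prems unfolding u_def s_def v_def w_def by auto
  have "\<bar>u * s - v * w\<bar> \<le> real a / real d + real a ^ 2 / real d"
  proof (cases "a \<le> i")
    case True
    have "w - s = (real a * (real d - real i)) / ((real d - real a) * real d)"
      unfolding s_def w_def using Suc.prems assms by (simp add: field_simps)
    moreover have "\<dots> \<le> (real a * (real d - real a)) / ((real d - real a) * real d)"
      using Suc.prems True by (intro divide_right_mono mult_left_mono) auto
    moreover have "0 \<le> real a * (real d - real i) / ((real d - real a) * real d)"
      using Suc.prems assms by simp
    ultimately have "\<bar>s - w\<bar> \<le> real a / real d"
      using Suc.prems by simp
    have "\<bar>u * s - v * w\<bar> = \<bar>u * (s - w) + (u - v) * w\<bar>"
      by (simp add: algebra_simps)
    also have "\<dots> \<le> u * \<bar>s - w\<bar> + \<bar>u - v\<bar> * w"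
      using u w by (simp add: abs_mult order_trans[OF abs_triangle_ineq])
    also have "\<dots> \<le> 1 * (real a / real d) + (real a ^ 2 / real d) * 1"
      using u w IH \<open>\<bar>s - w\<bar> \<le> real a / real d\<close> by (intro add_mono mult_mono) auto
    finally show ?thesis
      by simp
  next
    case False
    then have "u = 0"
      unfolding u_def Bernstein_coeff_def by simp
    have "v * w \<le> real a ^ 2 / real d"
      using IH \<open>u = 0\<close> v w mult_left_le[of w v] by simp
    then show ?thesis
      using \<open>u = 0\<close> v w by (simp add: add_increasing)
  qed
  also have "\<dots> \<le> real (Suc a) ^ 2 / real d"
    using assms by (simp add: divide_simps power2_eq_square algebra_simps)
  finally show ?case
    using eq by simp
qed (simp add: Bernstein_coeff_def)

definition monomial :: "nat set \<Rightarrow> (nat \<Rightarrow> nat) \<Rightarrow> pt \<Rightarrow> real" where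
  "monomial J e y = (\<Prod>j\<in>J. y j ^ e j)"

definition Bernstein_multi :: "nat set \<Rightarrow> nat \<Rightarrow> (nat \<Rightarrow> nat) \<Rightarrow> pt \<Rightarrow> real" where
  "Bernstein_multi J d i y = (\<Prod>j\<in>J. Bernstein d (i j) (y j))"

lemma monomial_eq_sum_Bernstein_multi:
  assumes "finite J" "\<And>j. j \<in> J \<Longrightarrow> e j \<le> d"
  shows "monomial J e y =
    (\<Sum>i\<in>PiE J (\<lambda>_. {..d}). (\<Prod>j\<in>J. Bernstein_coeff d (e j) (i j)) * Bernstein_multi J d i y)"
proof -
  have "monomial J e y = (\<Prod>j\<in>J. \<Sum>k\<le>d. Bernstein_coeff d (e j) k * Bernstein d k (y j))"
    unfolding monomial_def using assms by (intro prod.cong refl power_eq_sum_Bernstein) auto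
  also have "\<dots> = (\<Sum>i\<in>PiE J (\<lambda>_. {..d}). \<Prod>j\<in>J. Bernstein_coeff d (e j) (i j) * Bernstein d (i j) (y j))"
    using assms by (subst prod_sum_PiE) auto
  finally show ?thesis
    by (simp add: Bernstein_multi_def prod.distrib)
qed

lemma poly_in_monomial_expansion:
  assumes "F \<in> poly_in J" "finite J"
  shows "\<exists>L. \<forall>y. F y = (\<Sum>p\<leftarrow>L. fst p * monomial J (snd p) y)"
  using assms(1) unfolding poly_in_def
proof (induction rule: alg_gen.induct)
  case (const c)
  show ?case
    by (rule exI[of _ "[(c, \<lambda>_. 0)]"]) (simp add: monomial_def)
next
  case (gen q)
  then obtain i where i: "i \<in> J" "q = (\<lambda>x. x i)"
    by auto
  have "monomial J (\<lambda>j. if j = i then 1 else 0) y = y i" for y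
    unfolding monomial_def using i(1) assms(2) by (simp add: if_distrib prod.delta' cong: if_cong)
  then show ?case
    using i by (intro exI[of _ "[(1, \<lambda>j. if j = i then 1 else 0)]"]) simp
next
  case (add p q)
  then obtain Lp Lq where "\<forall>y. p y = (\<Sum>r\<leftarrow>Lp. fst r * monomial J (snd r) y)"
    "\<forall>y. q y = (\<Sum>r\<leftarrow>Lq. fst r * monomial J (snd r) y)"
    by blast
  then show ?case
    by (intro exI[of _ "Lp @ Lq"]) simp
next
  case (mult p q)
  then obtain Lp Lq where "\<forall>y. p y = (\<Sum>r\<leftarrow>Lp. fst r * monomial J (snd r) y)"
    "\<forall>y. q y = (\<Sum>r\<leftarrow>Lq. fst r * monomial J (snd r) y)"
    by blast
  moreover have "(\<Sum>r\<leftarrow>Lp. f r) * (\<Sum>s\<leftarrow>Lq. h s) = (\<Sum>rs\<leftarrow>List.product Lp Lq. f (fst rs) * h (snd rs))"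
    for f h :: "real \<times> (nat \<Rightarrow> nat) \<Rightarrow> real"
    by (induction Lp) (auto simp: sum_list_const_mult algebra_simps o_def)
  ultimately show ?case
    by (intro exI[of _ "map (\<lambda>(r, s). (fst r * fst s, \<lambda>j. snd r j + snd s j)) (List.product Lp Lq)"])
      (simp add: o_def case_prod_beta monomial_def power_add prod.distrib algebra_simps)
qed

lemma abs_prod_diff_le_sum:
  fixes u v :: "'a \<Rightarrow> real"
  assumes "finite A" "\<And>j. j \<in> A \<Longrightarrow> 0 \<le> u j \<and> u j \<le> 1 \<and> 0 \<le> v j \<and> v j \<le> 1"
  shows "\<bar>(\<Prod>j\<in>A. u j) - (\<Prod>j\<in>A. v j)\<bar> \<le> (\<Sum>j\<in>A. \<bar>u j - v j\<bar>)"
  using assms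
proof (induction A rule: finite_induct)
  case (insert a A)
  define U V where "U = (\<Prod>j\<in>A. u j)" and "V = (\<Prod>j\<in>A. v j)"
  have V: "0 \<le> V" "V \<le> 1"
    unfolding V_def using insert by (auto intro: prod_nonneg prod_le_1)
  have a: "0 \<le> u a" "u a \<le> 1"
    using insert by auto
  have "\<bar>u a * U - v a * V\<bar> = \<bar>u a * (U - V) + (u a - v a) * V\<bar>"
    by (simp add: algebra_simps)
  also have "\<dots> \<le> u a * \<bar>U - V\<bar> + \<bar>u a - v a\<bar> * V"
    using a V by (simp add: abs_mult order_trans[OF abs_triangle_ineq])
  also have "\<dots> \<le> \<bar>U - V\<bar> + \<bar>u a - v a\<bar>"
    using a V by (intro add_mono mult_left_le_one_le mult_right_le_one_le) auto
  finally show ?case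
    using insert unfolding U_def V_def by simp
qed simp

lemma Bernstein_coeff_monomial_approx:
  assumes "finite J" "0 < d" "\<And>j. j \<in> J \<Longrightarrow> e j \<le> d \<and> i j \<le> d"
  shows "\<bar>(\<Prod>j\<in>J. Bernstein_coeff d (e j) (i j)) - monomial J e (\<lambda>j. real (i j) / real d)\<bar>
    \<le> (\<Sum>j\<in>J. real (e j) ^ 2) / real d"
proof -
  have "\<bar>(\<Prod>j\<in>J. Bernstein_coeff d (e j) (i j)) - monomial J e (\<lambda>j. real (i j) / real d)\<bar>
      \<le> (\<Sum>j\<in>J. \<bar>Bernstein_coeff d (e j) (i j) - (real (i j) / real d) ^ e j\<bar>)"
    unfolding monomial_def using assms
    by (intro abs_prod_diff_le_sum) (auto intro: Bernstein_coeff_nonneg Bernstein_coeff_le_1 power_le_one)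
  also have "\<dots> \<le> (\<Sum>j\<in>J. real (e j) ^ 2 / real d)"
    using assms by (intro sum_mono Bernstein_coeff_approx) auto
  finally show ?thesis
    by (simp add: sum_divide_distrib)
qed

lemma monomial_sum_eq_sum_Bernstein_multi:
  assumes "finite J" "\<forall>p\<in>set L. \<forall>j\<in>J. snd p j \<le> d"
  shows "(\<Sum>p\<leftarrow>L. fst p * monomial J (snd p) y) =
    (\<Sum>i\<in>PiE J (\<lambda>_. {..d}).
       (\<Sum>p\<leftarrow>L. fst p * (\<Prod>j\<in>J. Bernstein_coeff d (snd p j) (i j))) * Bernstein_multi J d i y)"
  using assms(2)
proof (induction L)
  case (Cons p L)
  then show ?case
    using monomial_eq_sum_Bernstein_multi[OF assms(1), of "snd p" d y]
    by (simp add: sum_distrib_left sum.distrib algebra_simps)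
qed simp

lemma Bernstein_coeff_monomial_sum_approx:
  assumes "finite J" "0 < d" "\<forall>p\<in>set L. \<forall>j\<in>J. snd p j \<le> d" "\<And>j. j \<in> J \<Longrightarrow> i j \<le> d"
  shows "\<bar>(\<Sum>p\<leftarrow>L. fst p * (\<Prod>j\<in>J. Bernstein_coeff d (snd p j) (i j)))
           - (\<Sum>p\<leftarrow>L. fst p * monomial J (snd p) (\<lambda>j. real (i j) / real d))\<bar>
    \<le> (\<Sum>p\<leftarrow>L. \<bar>fst p\<bar> * (\<Sum>j\<in>J. real (snd p j) ^ 2)) / real d"
  using assms(3)
proof (induction L)
  case (Cons p L)
  have "\<bar>fst p * ((\<Prod>j\<in>J. Bernstein_coeff d (snd p j) (i j)) - monomial J (snd p) (\<lambda>j. real (i j) / real d))\<bar>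
      \<le> \<bar>fst p\<bar> * ((\<Sum>j\<in>J. real (snd p j) ^ 2) / real d)"
    unfolding abs_mult using Cons.prems assms
    by (intro mult_left_mono Bernstein_coeff_monomial_approx) auto
  with Cons show ?case
    by (simp add: add_divide_distrib algebra_simps)
qed simp

section \<open>Handelman representations on the unit cube\<close>

definition cube_prod :: "nat set \<Rightarrow> (nat \<Rightarrow> nat) \<times> (nat \<Rightarrow> nat) \<Rightarrow> pt \<Rightarrow> real" where
  "cube_prod J ab y = (\<Prod>j\<in>J. y j ^ fst ab j * (1 - y j) ^ snd ab j)"

definition handelman_repr :: "nat set \<Rightarrow> (pt \<Rightarrow> real) \<Rightarrow> bool" where
  "handelman_repr J F \<longleftrightarrow> (\<exists>S c. finite S \<and> S \<subseteq> N_set J \<and> (\<forall>ab\<in>S. 0 < c ab) \<and>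
     (\<forall>y. F y = (\<Sum>ab\<in>S. c ab * cube_prod J ab y)))"

definition unit_cube :: "nat set \<Rightarrow> pt set" where
  "unit_cube J = {y. \<forall>j. y j \<in> (if j \<in> J then {0..1} else {0})}"

lemma mem_unit_cube: "y \<in> unit_cube J \<longleftrightarrow> (\<forall>j\<in>J. 0 \<le> y j \<and> y j \<le> 1) \<and> (\<forall>j. j \<notin> J \<longrightarrow> y j = 0)"
  unfolding unit_cube_def by (auto split: if_splits)

lemma compact_unit_cube: "compact (unit_cube J)"
  unfolding unit_cube_def by (rule compact_coordinate_box) auto

lemma handelman_repr_Bernstein_sum:
  assumes "finite J" "\<forall>i\<in>PiE J (\<lambda>_. {..d}). 0 < b i"
  shows "handelman_repr J (\<lambda>y. \<Sum>i\<in>PiE J (\<lambda>_. {..d}). b i * Bernstein_multi J d i y)"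
proof -
  define ext :: "(nat \<Rightarrow> nat) \<Rightarrow> nat \<Rightarrow> nat" where "ext i j = (if j \<in> J then i j else 0)" for i j
  define pr where "pr i = (ext i, ext (\<lambda>j. d - i j))" for i
  define c where "c ab = b (restrict (fst ab) J) * (\<Prod>j\<in>J. real (d choose fst ab j))"
    for ab :: "(nat \<Rightarrow> nat) \<times> (nat \<Rightarrow> nat)"
  have restrict_ext: "restrict (ext i) J = i" if "i \<in> PiE J (\<lambda>_. {..d})" for i
    using that by (auto simp: ext_def restrict_def PiE_def extensional_def fun_eq_iff)
  have "inj_on pr (PiE J (\<lambda>_. {..d}))"
    by (rule inj_onI) (metis fst_conv pr_def restrict_ext)
  moreover have "pr ` PiE J (\<lambda>_. {..d}) \<subseteq> N_set J"
    by (auto simp: N_set_def pr_def ext_def supp_idx_def)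
  moreover have "0 < c (pr i)" if "i \<in> PiE J (\<lambda>_. {..d})" for i
    using that assms(2) restrict_ext[OF that] unfolding c_def pr_def
    by (auto intro!: mult_pos_pos prod_pos simp: ext_def)
  moreover have "c (pr i) * cube_prod J (pr i) y = b i * Bernstein_multi J d i y"
    if "i \<in> PiE J (\<lambda>_. {..d})" for i y
    using restrict_ext[OF that]
    by (simp add: c_def pr_def cube_prod_def Bernstein_multi_def Bernstein_def ext_def prod.distrib
        mult.assoc cong: prod.cong)
  ultimately show ?thesis
    unfolding handelman_repr_def using assms(1)
    by (intro exI[of _ "pr ` PiE J (\<lambda>_. {..d})"] exI[of _ c])
      (auto simp: sum.reindex finite_PiE cong: sum.cong)
qed

text \<open>In high enough degree the Bernstein coefficients of \<open>F\<close> are close to the values of \<open>F\<close> at the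
  grid points, hence positive.\<close>

lemma Bernstein_coeff_monomial_sum_pos:
  assumes "finite J" "0 < d" "\<forall>p\<in>set L. \<forall>j\<in>J. snd p j \<le> d" "i \<in> PiE J (\<lambda>_. {..d})"
    and F: "\<forall>y\<in>unit_cube J. \<epsilon> \<le> (\<Sum>p\<leftarrow>L. fst p * monomial J (snd p) y)"
    and d: "(\<Sum>p\<leftarrow>L. \<bar>fst p\<bar> * (\<Sum>j\<in>J. real (snd p j) ^ 2)) / real d < \<epsilon>"
  shows "0 < (\<Sum>p\<leftarrow>L. fst p * (\<Prod>j\<in>J. Bernstein_coeff d (snd p j) (i j)))"
proof -
  define \<xi> where "\<xi> j = (if j \<in> J then real (i j) / real d else 0)" for j
  have "\<xi> \<in> unit_cube J"
    using assms(2,4) by (auto simp: \<xi>_def mem_unit_cube)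
  moreover have "monomial J e \<xi> = monomial J e (\<lambda>j. real (i j) / real d)" for e
    unfolding monomial_def \<xi>_def by (simp cong: prod.cong)
  moreover have "\<bar>(\<Sum>p\<leftarrow>L. fst p * (\<Prod>j\<in>J. Bernstein_coeff d (snd p j) (i j)))
      - (\<Sum>p\<leftarrow>L. fst p * monomial J (snd p) (\<lambda>j. real (i j) / real d))\<bar>
      \<le> (\<Sum>p\<leftarrow>L. \<bar>fst p\<bar> * (\<Sum>j\<in>J. real (snd p j) ^ 2)) / real d"
    using assms(1-4) by (intro Bernstein_coeff_monomial_sum_approx) auto
  ultimately show ?thesis
    using F d by fastforce
qed

theorem unit_cube_Handelman:
  assumes "finite J" "F \<in> poly_in J" "\<forall>y\<in>unit_cube J. 0 < F y"
  shows "handelman_repr J F"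
proof -
  obtain L where L: "\<And>y. F y = (\<Sum>p\<leftarrow>L. fst p * monomial J (snd p) y)"
    using poly_in_monomial_expansion[OF assms(2,1)] by blast
  obtain \<epsilon> where \<epsilon>: "0 < \<epsilon>" "\<forall>y\<in>unit_cube J. \<epsilon> \<le> F y"
    using compact_pos_imp_uniformly_pos[OF compact_unit_cube continuous_on_poly_in[OF assms(2)] assms(3)]
    by blast
  define C where "C = (\<Sum>p\<leftarrow>L. \<bar>fst p\<bar> * (\<Sum>j\<in>J. real (snd p j) ^ 2))"
  define d where "d = (\<Sum>p\<leftarrow>L. \<Sum>j\<in>J. snd p j) + 1 + nat \<lceil>C / \<epsilon>\<rceil>"
  have "0 < d"
    by (simp add: d_def)
  have deg: "\<forall>p\<in>set L. \<forall>j\<in>J. snd p j \<le> d"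
  proof (intro ballI)
    fix p j assume "p \<in> set L" "j \<in> J"
    then have "snd p j \<le> (\<Sum>j\<in>J. snd p j)" "(\<Sum>j\<in>J. snd p j) \<le> (\<Sum>p\<leftarrow>L. \<Sum>j\<in>J. snd p j)"
      using assms(1) member_le_sum_list[of "sum (snd p) J" "map (\<lambda>p. sum (snd p) J) L"]
      by (auto intro: member_le_sum)
    then show "snd p j \<le> d"
      unfolding d_def by linarith
  qed
  have "C / \<epsilon> < real d"
    unfolding d_def by linarith
  then have "C / real d < \<epsilon>"
    using \<epsilon>(1) \<open>0 < d\<close> by (simp add: divide_less_eq mult.commute)
  then have "0 < (\<Sum>p\<leftarrow>L. fst p * (\<Prod>j\<in>J. Bernstein_coeff d (snd p j) (i j)))"
    if "i \<in> PiE J (\<lambda>_. {..d})" for i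
    using Bernstein_coeff_monomial_sum_pos[OF assms(1) \<open>0 < d\<close> deg that] \<epsilon>(2) unfolding L C_def by blast
  moreover have "F = (\<lambda>y. \<Sum>i\<in>PiE J (\<lambda>_. {..d}).
      (\<Sum>p\<leftarrow>L. fst p * (\<Prod>j\<in>J. Bernstein_coeff d (snd p j) (i j))) * Bernstein_multi J d i y)"
    using monomial_sum_eq_sum_Bernstein_multi[OF assms(1) deg] L by auto
  ultimately show ?thesis
    using handelman_repr_Bernstein_sum[OF assms(1)] by simp
qed

section \<open>Representation on a single clique\<close>

lemma compact_penalty_pos:
  fixes F P :: "'a::metric_space \<Rightarrow> real"
  assumes "compact X" "continuous_on X F" "continuous_on X P"
    and "\<forall>y\<in>X. 0 \<le> P y" "\<forall>y\<in>X. P y = 0 \<longrightarrow> 0 < F y"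
  shows "\<exists>N. \<forall>y\<in>X. 0 < F y + N * P y"
proof -
  define Z where "Z = {y \<in> X. F y \<le> 0}"
  have "closed Z"
    unfolding Z_def using assms(1,2) by (intro continuous_on_closed_Collect_le compact_imp_closed) auto
  moreover have "Z \<subseteq> X"
    by (auto simp: Z_def)
  ultimately have "compact Z"
    using compact_Int_closed[OF assms(1)] by (metis Int_absorb1)
  moreover have "continuous_on Z P"
    using assms(3) \<open>Z \<subseteq> X\<close> by (rule continuous_on_subset)
  moreover have "\<forall>y\<in>Z. 0 < P y"
    using assms(4,5) by (force simp: Z_def)
  ultimately obtain \<mu> where \<mu>: "0 < \<mu>" "\<forall>y\<in>Z. \<mu> \<le> P y"
    using compact_pos_imp_uniformly_pos by blast
  obtain a where a: "\<forall>y\<in>X. \<bar>F y\<bar> \<le> a"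
    using compact_imp_bounded[OF compact_continuous_image[OF assms(2,1)]] by (auto simp: bounded_real)
  have "0 < F y + (\<bar>a\<bar> + 1) / \<mu> * P y" if "y \<in> X" for y
  proof (cases "y \<in> Z")
    case True
    then have "(\<bar>a\<bar> + 1) * \<mu> \<le> (\<bar>a\<bar> + 1) * P y"
      using \<mu> by (intro mult_left_mono) auto
    then have "\<bar>a\<bar> + 1 \<le> (\<bar>a\<bar> + 1) / \<mu> * P y"
      using \<mu>(1) by (simp add: field_simps)
    then show ?thesis
      using a that by fastforce
  next
    case False
    then show ?thesis
      using assms(4) that \<mu>(1) by (auto simp: Z_def intro!: add_pos_nonneg)
  qed
  then show ?thesis
    by blast
qed

text \<open>Writing \<open>x\<^sub>i = P\<^sub>i (g x)\<close>, a point \<open>y\<close> of the cube comes from a point of \<open>K\<close> exactly when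
  \<open>y\<^sub>j = g\<^sub>j (P y)\<close> for all \<open>j\<close>; a large multiple of the penalty \<open>\<Sum>\<^sub>j (y\<^sub>j - g\<^sub>j (P y))\<^sup>2\<close>, which vanishes
  on the image of \<open>g\<close>, makes the lift of \<open>f\<close> positive on the whole cube.\<close>

lemma poly_in_lift_pos_on_unit_cube:
  assumes "finite J" and g: "\<forall>j\<in>J. g j \<in> poly_in I" and gen: "poly_in I \<subseteq> alg_gen (g ` J)"
    and "f \<in> poly_in I" and f_pos: "\<forall>x\<in>K_loc I J g. 0 < f x"
  shows "\<exists>F\<in>poly_in J. (\<forall>x. f x = F (\<lambda>j. g j x)) \<and> (\<forall>y\<in>unit_cube J. 0 < F y)"
proof -
  obtain F where F: "F \<in> poly_in J" "\<And>x. f x = F (\<lambda>j. g j x)"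
    using alg_gen_image_eq_compose \<open>f \<in> poly_in I\<close> gen by blast
  have "\<forall>i\<in>I. \<exists>Q\<in>poly_in J. \<forall>x. x i = Q (\<lambda>j. g j x)"
    using alg_gen_image_eq_compose gen poly_in_coord by blast
  then obtain P where P: "\<And>i. i \<in> I \<Longrightarrow> P i \<in> poly_in J" "\<And>i x. i \<in> I \<Longrightarrow> x i = P i (\<lambda>j. g j x)"
    by metis
  define Pm where "Pm y = (\<lambda>i. if i \<in> I then P i y else 0)" for y
  define Pen where "Pen y = (\<Sum>j\<in>J. (y j - g j (Pm y)) ^ 2)" for y
  have "(\<lambda>y. g j (Pm y)) \<in> poly_in J" if "j \<in> J" for j
    unfolding Pm_def using g that P(1) by (intro poly_in_compose) auto
  then have "Pen \<in> poly_in J"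
    unfolding Pen_def poly_in_def using assms(1)
    by (intro alg_gen_sum alg_gen_power alg_gen_diff) (auto simp: poly_in_def intro: alg_gen.gen)
  have Pen_image: "Pen (\<lambda>j. g j x) = 0" for x
  proof -
    have "Pm (\<lambda>j. g j x) i = x i" if "i \<in> I" for i
      using that P(2)[symmetric] by (simp add: Pm_def)
    then have "g j (Pm (\<lambda>j. g j x)) = g j x" if "j \<in> J" for j
      using poly_in_cong[of "g j" I] g that by blast
    then show ?thesis
      by (simp add: Pen_def)
  qed
  have "0 < F y" if "y \<in> unit_cube J" "Pen y = 0" for y
  proof -
    have y: "y j = g j (Pm y)" if "j \<in> J" for j
      using \<open>Pen y = 0\<close> assms(1) that by (simp add: Pen_def sum_nonneg_eq_0_iff)
    moreover have "0 \<le> y j \<and> y j \<le> 1" if "j \<in> J" for j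
      using \<open>y \<in> unit_cube J\<close> that by (simp add: mem_unit_cube)
    ultimately have "Pm y \<in> K_loc I J g"
      unfolding K_loc_def by (auto simp: Pm_def)
    moreover have "F (\<lambda>j. g j (Pm y)) = F y"
      by (rule poly_in_cong[OF F(1)]) (simp add: y)
    ultimately show ?thesis
      using f_pos F(2) by metis
  qed
  then obtain N where N: "\<forall>y\<in>unit_cube J. 0 < F y + N * Pen y"
    using compact_penalty_pos[OF compact_unit_cube continuous_on_poly_in[OF F(1)]
        continuous_on_poly_in[OF \<open>Pen \<in> poly_in J\<close>]] by (force simp: Pen_def intro: sum_nonneg)
  have "(\<lambda>y. F y + N * Pen y) \<in> poly_in J"
    using F(1) \<open>Pen \<in> poly_in J\<close> unfolding poly_in_def by (intro alg_gen.add alg_gen_cmult)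
  then show ?thesis
    using N F(2) Pen_image by (intro bexI[of _ "\<lambda>y. F y + N * Pen y"]) auto
qed

definition h_repr :: "nat \<Rightarrow> (nat \<Rightarrow> pt \<Rightarrow> real) \<Rightarrow> nat set \<Rightarrow> ((nat \<Rightarrow> nat) \<times> (nat \<Rightarrow> nat) \<Rightarrow> real) \<Rightarrow>
    (pt \<Rightarrow> real) \<Rightarrow> bool" where
  "h_repr m g J c f \<longleftrightarrow> (\<exists>S. finite S \<and> S \<subseteq> N_set J \<and> (\<forall>ab\<in>S. c ab > 0) \<and>
     f = (\<lambda>x. \<Sum>ab\<in>S. c ab * h_ab m g (fst ab) (snd ab) x))"

lemma h_ab_eq_cube_prod:
  assumes "J \<subseteq> {1..m}" "ab \<in> N_set J"
  shows "h_ab m g (fst ab) (snd ab) x = cube_prod J ab (\<lambda>j. g j x)"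
proof -
  have "fst ab j = 0" "snd ab j = 0" if "j \<notin> J" for j
    using assms(2) that by (auto simp: N_set_def supp_idx_def)
  then show ?thesis
    unfolding h_ab_def cube_prod_def using assms(1) by (intro prod.mono_neutral_right) auto
qed

theorem local_Handelman:
  assumes "J \<subseteq> {1..m}" "\<forall>j\<in>J. g j \<in> poly_in I" "poly_in I \<subseteq> alg_gen (g ` J)"
    and "f \<in> poly_in I" "\<forall>x\<in>K_loc I J g. 0 < f x"
  shows "\<exists>c. h_repr m g J c f"
proof -
  have "finite J"
    using assms(1) by (rule finite_subset) simp
  then obtain F where F: "F \<in> poly_in J" "\<forall>x. f x = F (\<lambda>j. g j x)" "\<forall>y\<in>unit_cube J. 0 < F y"
    using poly_in_lift_pos_on_unit_cube[OF _ assms(2-5)] by blast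
  then have "handelman_repr J F"
    using unit_cube_Handelman[OF \<open>finite J\<close>] by blast
  then obtain S c where S: "finite S" "S \<subseteq> N_set J" "\<forall>ab\<in>S. 0 < c ab"
    and F_eq: "\<forall>y. F y = (\<Sum>ab\<in>S. c ab * cube_prod J ab y)"
    unfolding handelman_repr_def by blast
  have "f = (\<lambda>x. \<Sum>ab\<in>S. c ab * h_ab m g (fst ab) (snd ab) x)"
  proof
    fix x
    have "f x = (\<Sum>ab\<in>S. c ab * cube_prod J ab (\<lambda>j. g j x))"
      using F(2) F_eq by simp
    also have "\<dots> = (\<Sum>ab\<in>S. c ab * h_ab m g (fst ab) (snd ab) x)"
      using S(2) h_ab_eq_cube_prod[OF assms(1)] by (intro sum.cong refl) auto
    finally show "f x = (\<Sum>ab\<in>S. c ab * h_ab m g (fst ab) (snd ab) x)" .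
  qed
  with S show ?thesis
    unfolding h_repr_def by blast
qed

section \<open>Separating two cliques by a polynomial in their common variables\<close>

lemma finite_cover_continuous_selection:
  fixes Y :: "'a::metric_space set" and T :: "'a \<Rightarrow> real set"
  assumes "finite Y0" "Y \<subseteq> (\<Union>y\<in>Y0. V y)" "\<And>y. y \<in> Y0 \<Longrightarrow> open (V y)"
    and convex: "\<And>y. y \<in> Y \<Longrightarrow> convex (T y)"
    and t: "\<And>y y'. y \<in> Y0 \<Longrightarrow> y' \<in> Y \<inter> V y \<Longrightarrow> t y \<in> T y'"
  obtains \<phi> where "continuous_on Y \<phi>" "\<And>y. y \<in> Y \<Longrightarrow> \<phi> y \<in> T y"
proof -
  define \<C> where "\<C> = V ` Y0"
  define tC where "tC U = t (SOME y. y \<in> Y0 \<and> V y = U)" for U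
  have tC: "tC U \<in> T y" if "U \<in> \<C>" "y \<in> Y" "y \<in> U" for U y
  proof -
    have "\<exists>y. y \<in> Y0 \<and> V y = U"
      using that(1) by (auto simp: \<C>_def)
    then show ?thesis
      using someI_ex[of "\<lambda>y. y \<in> Y0 \<and> V y = U"] t that(2,3) unfolding tC_def by blast
  qed
  have "finite \<C>"
    using assms(1) by (simp add: \<C>_def)
  have cover: "Y \<subseteq> \<Union>\<C>" and opn: "\<And>U. U \<in> \<C> \<Longrightarrow> open U"
    using assms(2,3) by (auto simp: \<C>_def)
  have fin: "\<exists>W. open W \<and> y \<in> W \<and> finite {U \<in> \<C>. U \<inter> W \<noteq> {}}" for y
    using finite_subset[OF _ \<open>finite \<C>\<close>, of "{U \<in> \<C>. U \<inter> UNIV \<noteq> {}}"] by blast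
  obtain F :: "'a set \<Rightarrow> 'a \<Rightarrow> real"
    where F_cont: "\<And>U. U \<in> \<C> \<Longrightarrow> continuous_on Y (F U) \<and> (\<forall>y\<in>Y. 0 \<le> F U y)"
      and F_supp: "\<And>y U. \<lbrakk>U \<in> \<C>; y \<in> Y; y \<notin> U\<rbrakk> \<Longrightarrow> F U y = 0"
      and F_sum: "\<And>y. y \<in> Y \<Longrightarrow> supp_sum (\<lambda>U. F U y) \<C> = 1"
    by (rule subordinate_partition_of_unity[OF cover opn fin]) auto
  have supp_sum_eq: "supp_sum f \<C> = sum f \<C>" for f :: "'a set \<Rightarrow> real"
    unfolding supp_sum_def using \<open>finite \<C>\<close> by (intro sum.mono_neutral_left) (auto simp: support_on_def)
  show ?thesis
  proof (rule that)
    show "continuous_on Y (\<lambda>y. \<Sum>U\<in>\<C>. F U y * tC U)"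
      using F_cont by (intro continuous_intros) auto
    fix y assume "y \<in> Y"
    have "0 \<le> F U y \<and> (F U y = 0 \<or> tC U \<in> T y)" if "U \<in> \<C>" for U
      using F_cont F_supp tC that \<open>y \<in> Y\<close> by blast
    then have "supp_sum (\<lambda>U. F U y *\<^sub>R tC U) \<C> \<in> T y"
      using convex \<open>y \<in> Y\<close> F_sum by (intro convex_supp_sum) auto
    then show "(\<Sum>U\<in>\<C>. F U y * tC U) \<in> T y"
      by (simp add: supp_sum_eq)
  qed
qed

lemma convex_values_continuous_selection:
  fixes Y :: "'a::metric_space set" and T :: "'a \<Rightarrow> real set"
  assumes "compact Y" and convex: "\<And>y. y \<in> Y \<Longrightarrow> convex (T y)"
    and local: "\<And>y. y \<in> Y \<Longrightarrow> \<exists>V t. open V \<and> y \<in> V \<and> (\<forall>y'\<in>Y \<inter> V. t \<in> T y')"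
  obtains \<phi> where "continuous_on Y \<phi>" "\<And>y. y \<in> Y \<Longrightarrow> \<phi> y \<in> T y"
proof -
  have "\<forall>y\<in>Y. \<exists>p. open (fst p) \<and> y \<in> fst p \<and> (\<forall>y'\<in>Y \<inter> fst p. snd p \<in> T y')"
    using local by (metis fst_conv snd_conv)
  then obtain p where p: "\<forall>y\<in>Y. open (fst (p y)) \<and> y \<in> fst (p y) \<and> (\<forall>y'\<in>Y \<inter> fst (p y). snd (p y) \<in> T y')"
    by (metis bchoice)
  obtain Y0 where Y0: "Y0 \<subseteq> Y" "finite Y0" "Y \<subseteq> (\<Union>y\<in>Y0. fst (p y))"
    by (rule compactE_image[OF assms(1), of Y "\<lambda>y. fst (p y)"]) (use p in blast)+
  show ?thesis
    by (rule finite_cover_continuous_selection[OF Y0(2,3) _ convex, where t = "\<lambda>y. snd (p y)"])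
      (use p Y0(1) that in blast)+
qed

lemma compact_Collect_preimage:
  assumes "compact K" "continuous_on K u" "closed A"
  shows "compact {x \<in> K. u x \<in> A}"
proof -
  have "{x \<in> K. u x \<in> A} = K \<inter> u -` A"
    by auto
  then show ?thesis
    using closedin_compact[OF assms(1) continuous_closedin_preimage[OF assms(2,3)]] by simp
qed

lemma fiber_separation_local:
  fixes \<pi> :: "'a::metric_space \<Rightarrow> 'b::metric_space" and f1 f2 :: "'a \<Rightarrow> real"
  assumes K: "compact K1" "compact K2" and cont: "continuous_on K1 f1" "continuous_on K2 f2"
    "continuous_on (K1 \<union> K2) \<pi>"
    and pos: "\<forall>x\<in>K1. \<forall>z\<in>K2. \<pi> x = \<pi> z \<longrightarrow> 0 < f1 x + f2 z"
  obtains V t where "open V" "y \<in> V" "\<forall>x\<in>K1. \<pi> x \<in> V \<longrightarrow> t < f1 x" "\<forall>z\<in>K2. \<pi> z \<in> V \<longrightarrow> - f2 z < t"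
proof -
  have \<pi>: "continuous_on K1 \<pi>" "continuous_on K2 \<pi>"
    using cont(3) by (auto intro: continuous_on_subset)
  have "compact (f1 ` {x \<in> K1. \<pi> x \<in> {y}})"
    using K cont \<pi> by (intro compact_continuous_image compact_Collect_preimage) (auto intro: continuous_on_subset)
  moreover have "compact ((\<lambda>z. - f2 z) ` {z \<in> K2. \<pi> z \<in> {y}})"
    using K cont \<pi>
    by (intro compact_continuous_image compact_Collect_preimage continuous_intros) (auto intro: continuous_on_subset)
  moreover have "\<forall>a\<in>f1 ` {x \<in> K1. \<pi> x \<in> {y}}. \<forall>b\<in>(\<lambda>z. - f2 z) ` {z \<in> K2. \<pi> z \<in> {y}}. b < a"
    using pos by force
  ultimately obtain t where "\<forall>a\<in>f1 ` {x \<in> K1. \<pi> x \<in> {y}}. t < a"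
    "\<forall>b\<in>(\<lambda>z. - f2 z) ` {z \<in> K2. \<pi> z \<in> {y}}. b < t"
    by (meson compact_real_sets_separated)
  then have t: "\<forall>x\<in>K1. \<pi> x = y \<longrightarrow> t < f1 x" "\<forall>z\<in>K2. \<pi> z = y \<longrightarrow> - f2 z < t"
    by auto
  define B where "B = \<pi> ` {x \<in> K1. f1 x \<in> {..t}} \<union> \<pi> ` {z \<in> K2. - f2 z \<in> {t..}}"
  have "compact B"
    unfolding B_def using K cont \<pi>
    by (intro compact_Un compact_continuous_image compact_Collect_preimage continuous_intros)
      (auto intro: continuous_on_subset)
  then have "open (- B)"
    by (simp add: compact_imp_closed open_Compl)
  moreover have "y \<in> - B"
    using t by (auto simp: B_def)
  moreover have "t < f1 x" if "x \<in> K1" "\<pi> x \<in> - B" for x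
    using that by (auto simp: B_def)
  moreover have "- f2 z < t" if "z \<in> K2" "\<pi> z \<in> - B" for z
    using that by (auto simp: B_def)
  ultimately show ?thesis
    using that[of "- B" t] by blast
qed

lemma continuous_fiber_separation:
  fixes \<pi> :: "'a::metric_space \<Rightarrow> 'b::metric_space" and f1 f2 :: "'a \<Rightarrow> real"
  assumes "compact K1" "compact K2" "continuous_on K1 f1" "continuous_on K2 f2"
    "continuous_on (K1 \<union> K2) \<pi>"
    and pos: "\<forall>x\<in>K1. \<forall>z\<in>K2. \<pi> x = \<pi> z \<longrightarrow> 0 < f1 x + f2 z"
  obtains \<phi> where "continuous_on (\<pi> ` (K1 \<union> K2)) \<phi>"
    "\<And>x. x \<in> K1 \<Longrightarrow> \<phi> (\<pi> x) < f1 x" "\<And>z. z \<in> K2 \<Longrightarrow> - f2 z < \<phi> (\<pi> z)"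
proof -
  define T where "T y = {t. (\<forall>x\<in>K1. \<pi> x = y \<longrightarrow> t < f1 x) \<and> (\<forall>z\<in>K2. \<pi> z = y \<longrightarrow> - f2 z < t)}" for y
  have convex: "convex (T y)" if "y \<in> \<pi> ` (K1 \<union> K2)" for y
    unfolding is_interval_convex_1[symmetric] is_interval_1
    by (simp add: T_def) (meson le_less_trans less_le_trans)
  have locally_separated: "\<exists>V t. open V \<and> y \<in> V \<and> (\<forall>y'\<in>\<pi> ` (K1 \<union> K2) \<inter> V. t \<in> T y')"
    if "y \<in> \<pi> ` (K1 \<union> K2)" for y
  proof -
    obtain V t where "open V" "y \<in> V" "\<forall>x\<in>K1. \<pi> x \<in> V \<longrightarrow> t < f1 x" "\<forall>z\<in>K2. \<pi> z \<in> V \<longrightarrow> - f2 z < t"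
      by (rule fiber_separation_local[OF assms])
    then show ?thesis
      unfolding T_def by (intro exI[of _ V] exI[of _ t]) auto
  qed
  have "compact (\<pi> ` (K1 \<union> K2))"
    using assms by (intro compact_continuous_image compact_Un)
  then obtain \<phi> where \<phi>: "continuous_on (\<pi> ` (K1 \<union> K2)) \<phi>" "\<And>y. y \<in> \<pi> ` (K1 \<union> K2) \<Longrightarrow> \<phi> y \<in> T y"
    by (rule convex_values_continuous_selection[OF _ convex locally_separated]) auto
  show ?thesis
  proof (rule that[OF \<phi>(1)])
    show "\<phi> (\<pi> x) < f1 x" if "x \<in> K1" for x
      using \<phi>(2)[of "\<pi> x"] that by (auto simp: T_def)
    show "- f2 z < \<phi> (\<pi> z)" if "z \<in> K2" for z
      using \<phi>(2)[of "\<pi> z"] that by (auto simp: T_def)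
  qed
qed

lemma poly_in_uniform_approx:
  assumes "compact Y" "\<forall>y\<in>Y. \<forall>i. i \<notin> C \<longrightarrow> y i = 0" "continuous_on Y \<phi>" "0 < \<delta>"
  shows "\<exists>h\<in>poly_in C. \<forall>y\<in>Y. \<bar>\<phi> y - h y\<bar> < \<delta>"
proof -
  have "\<exists>h. h \<in> poly_in C \<and> (\<forall>y\<in>Y. \<bar>\<phi> y - h y\<bar> < \<delta>)"
  proof (rule Stone_Weierstrass_HOL[OF assms(1), of "\<lambda>h. h \<in> poly_in C"])
    show "\<exists>h. h \<in> poly_in C \<and> h x \<noteq> h y" if xy: "x \<in> Y \<and> y \<in> Y \<and> x \<noteq> y" for x y
    proof -
      obtain i where "x i \<noteq> y i"
        using xy by (metis ext)
      moreover have "x i = 0 \<and> y i = 0" if "i \<notin> C"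
        using xy assms(2) that by blast
      ultimately have "i \<in> C"
        by (metis (mono_tags))
      then show ?thesis
        using \<open>x i \<noteq> y i\<close> poly_in_coord by blast
    qed
  qed (use assms(3,4) in \<open>auto simp: poly_in_def intro: alg_gen.intros continuous_on_poly_in[unfolded poly_in_def]\<close>)
  then show ?thesis
    by blast
qed

theorem poly_in_separation:
  assumes K: "compact K1" "compact K2" and cont: "continuous_on K1 f1" "continuous_on K2 f2"
    and pos: "\<forall>x\<in>K1. \<forall>z\<in>K2. (\<forall>i\<in>C. x i = z i) \<longrightarrow> 0 < f1 x + f2 z"
  shows "\<exists>h\<in>poly_in C. (\<forall>x\<in>K1. 0 < f1 x - h x) \<and> (\<forall>z\<in>K2. 0 < f2 z + h z)"
proof -
  define Y where "Y = restr C ` (K1 \<union> K2)"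
  have "\<forall>x\<in>K1. \<forall>z\<in>K2. restr C x = restr C z \<longrightarrow> 0 < f1 x + f2 z"
    using pos by (simp add: restr_eq_iff)
  then obtain \<phi> where \<phi>: "continuous_on Y \<phi>"
    "\<And>x. x \<in> K1 \<Longrightarrow> \<phi> (restr C x) < f1 x" "\<And>z. z \<in> K2 \<Longrightarrow> - f2 z < \<phi> (restr C z)"
    unfolding Y_def by (rule continuous_fiber_separation[OF K cont continuous_on_restr]) auto
  have \<phi>_restr: "continuous_on K (\<lambda>x. \<phi> (restr C x))" if "K \<subseteq> K1 \<union> K2" for K
    using that by (intro continuous_on_compose2[OF \<phi>(1) continuous_on_restr]) (auto simp: Y_def)
  have "continuous_on K1 (\<lambda>x. f1 x - \<phi> (restr C x))" "\<forall>x\<in>K1. 0 < f1 x - \<phi> (restr C x)"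
    using cont(1) \<phi>_restr[of K1] \<phi>(2) by (auto intro: continuous_on_diff)
  then obtain \<delta>1 where \<delta>1: "0 < \<delta>1" "\<forall>x\<in>K1. \<delta>1 \<le> f1 x - \<phi> (restr C x)"
    using compact_pos_imp_uniformly_pos[OF K(1)] by blast
  have "continuous_on K2 (\<lambda>z. f2 z + \<phi> (restr C z))" "\<forall>z\<in>K2. 0 < f2 z + \<phi> (restr C z)"
    using cont(2) \<phi>_restr[of K2] \<phi>(3) by (force intro: continuous_on_add)+
  then obtain \<delta>2 where \<delta>2: "0 < \<delta>2" "\<forall>z\<in>K2. \<delta>2 \<le> f2 z + \<phi> (restr C z)"
    using compact_pos_imp_uniformly_pos[OF K(2)] by blast
  have "compact Y"
    unfolding Y_def using K by (intro compact_continuous_image continuous_on_restr compact_Un)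
  then obtain h where h: "h \<in> poly_in C" "\<forall>y\<in>Y. \<bar>\<phi> y - h y\<bar> < min \<delta>1 \<delta>2"
    using poly_in_uniform_approx[of Y C \<phi> "min \<delta>1 \<delta>2"] \<phi>(1) \<delta>1(1) \<delta>2(1)
    by (auto simp: Y_def restr_def)
  have approx: "\<bar>\<phi> (restr C x) - h x\<bar> < min \<delta>1 \<delta>2" if "x \<in> K1 \<union> K2" for x
  proof -
    have "restr C x \<in> Y"
      using that by (simp add: Y_def)
    then show ?thesis
      using h(2) poly_in_restr[OF h(1), of x] by metis
  qed
  have "0 < f1 x - h x" if "x \<in> K1" for x
    using \<delta>1(2) that approx[of x] by (fastforce simp: abs_less_iff)
  moreover have "0 < f2 z + h z" if "z \<in> K2" for z
    using \<delta>2(2) that approx[of z] by (fastforce simp: abs_less_iff)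
  ultimately show ?thesis
    using h(1) by blast
qed

section \<open>Redistributing a positive sum along the running intersection property\<close>

lemma K_loc_restr:
  assumes "x \<in> K_loc I' J' g" "J \<subseteq> J'" "\<forall>j\<in>J. g j \<in> poly_in I"
  shows "restr I x \<in> K_loc I J g"
proof -
  have "g j (restr I x) = g j x" if "j \<in> J" for j
    using assms(3) that poly_in_restr by blast
  then show ?thesis
    using assms(1,2) unfolding K_loc_def by (auto simp: restr_def)
qed

lemma compact_K_loc_UN:
  assumes "finite L" "\<forall>l\<in>L. \<forall>j\<in>J l. g j \<in> poly_in (I l)" "\<forall>l\<in>L. compact (K_loc (I l) (J l) g)"
  shows "compact (K_loc (\<Union>l\<in>L. I l) (\<Union>l\<in>L. J l) g)"
proof -
  define S where "S i = insert 0 (\<Union>l\<in>L. (\<lambda>z. z i) ` K_loc (I l) (J l) g)" for i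
  have "compact (S i)" for i
    unfolding S_def using assms(1,3)
    by (intro compact_insert compact_UN compact_continuous_image)
      (auto intro: continuous_on_subset[OF continuous_on_product_coordinates])
  then have box: "compact {x. \<forall>i. x i \<in> S i}"
    by (rule compact_coordinate_box)
  have closed: "closed (K_loc (\<Union>l\<in>L. I l) (\<Union>l\<in>L. J l) g)"
    using assms(2) continuous_on_poly_in by (intro closed_K_loc) blast
  have sub: "K_loc (\<Union>l\<in>L. I l) (\<Union>l\<in>L. J l) g \<subseteq> {x. \<forall>i. x i \<in> S i}"
  proof (intro subsetI CollectI allI)
    fix x i assume x: "x \<in> K_loc (\<Union>l\<in>L. I l) (\<Union>l\<in>L. J l) g"
    show "x i \<in> S i"
    proof (cases "\<exists>l\<in>L. i \<in> I l")
      case True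
      then obtain l where "l \<in> L" "i \<in> I l"
        by blast
      then have "restr (I l) x \<in> K_loc (I l) (J l) g"
        using x assms(2) by (intro K_loc_restr) auto
      moreover have "x i = restr (I l) x i"
        using \<open>i \<in> I l\<close> by (simp add: restr_def)
      ultimately show ?thesis
        using \<open>l \<in> L\<close> unfolding S_def by blast
    qed (use x in \<open>auto simp: K_loc_def S_def\<close>)
  qed
  show ?thesis
    using compact_Int_closed[OF box closed] Int_absorb1[OF sub] by simp
qed

lemma K_loc_glue:
  assumes "x \<in> K_loc A JA g" "z \<in> K_loc B JB g" "\<forall>i\<in>A \<inter> B. x i = z i"
    and "\<forall>j\<in>JA. g j \<in> poly_in A" "\<forall>j\<in>JB. g j \<in> poly_in B"
  shows "(\<lambda>i. if i \<in> A then x i else z i) \<in> K_loc (A \<union> B) (JA \<union> JB) g"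
proof -
  define w where "w i = (if i \<in> A then x i else z i)" for i
  have "g j w = g j x" if "j \<in> JA" for j
    using assms(4) that by (intro poly_in_cong[of "g j" A]) (auto simp: w_def)
  moreover have "g j w = g j z" if "j \<in> JB" for j
    using assms(3,5) that by (intro poly_in_cong[of "g j" B]) (auto simp: w_def)
  ultimately have "\<forall>j\<in>JA \<union> JB. 0 \<le> g j w \<and> g j w \<le> 1"
    using assms(1,2) unfolding K_loc_def by auto
  moreover have "\<forall>i. i \<notin> A \<union> B \<longrightarrow> w i = 0"
    using assms(1,2) unfolding K_loc_def w_def by simp
  ultimately have "w \<in> K_loc (A \<union> B) (JA \<union> JB) g"
    unfolding K_loc_def by blast
  then show ?thesis
    by (simp add: w_def[abs_def])
qed

lemma positive_sum_transfer:
  assumes g_loc: "\<forall>l\<in>{1..Suc k}. \<forall>j\<in>J l. g j \<in> poly_in (I l)"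
    and K_compact: "\<forall>l\<in>{1..Suc k}. compact (K_loc (I l) (J l) g)"
    and F_poly: "\<forall>l\<in>{1..Suc k}. F l \<in> poly_in (I l)"
    and F_pos: "\<forall>x\<in>K_loc (\<Union>l\<in>{1..Suc k}. I l) (\<Union>l\<in>{1..Suc k}. J l) g. 0 < (\<Sum>l=1..Suc k. F l x)"
  shows "\<exists>h\<in>poly_in ((\<Union>l\<in>{1..k}. I l) \<inter> I (Suc k)).
     (\<forall>x\<in>K_loc (\<Union>l\<in>{1..k}. I l) (\<Union>l\<in>{1..k}. J l) g. 0 < (\<Sum>l=1..k. F l x) - h x) \<and>
     (\<forall>z\<in>K_loc (I (Suc k)) (J (Suc k)) g. 0 < F (Suc k) z + h z)"
proof -
  define A where "A = (\<Union>l\<in>{1..k}. I l)"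
  have g_A: "\<forall>j\<in>(\<Union>l\<in>{1..k}. J l). g j \<in> poly_in A"
  proof
    fix j assume "j \<in> (\<Union>l\<in>{1..k}. J l)"
    then obtain l where "l \<in> {1..k}" "j \<in> J l"
      by blast
    moreover have "I l \<subseteq> A"
      using \<open>l \<in> {1..k}\<close> by (auto simp: A_def)
    ultimately show "g j \<in> poly_in A"
      using g_loc poly_in_mono[of "I l" A] by auto
  qed
  have F_A: "(\<Sum>l=1..k. F l x) = (\<Sum>l=1..k. F l y)" if "\<forall>i\<in>A. x i = y i" for x y
  proof (rule sum.cong[OF refl])
    fix l assume "l \<in> {1..k}"
    then show "F l x = F l y"
      using F_poly that by (intro poly_in_cong[of "F l" "I l"]) (auto simp: A_def)
  qed
  have compact1: "compact (K_loc (\<Union>l\<in>{1..k}. I l) (\<Union>l\<in>{1..k}. J l) g)"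
    using g_loc K_compact by (intro compact_K_loc_UN) auto
  have compact2: "compact (K_loc (I (Suc k)) (J (Suc k)) g)"
    using K_compact by simp
  have cont1: "continuous_on (K_loc (\<Union>l\<in>{1..k}. I l) (\<Union>l\<in>{1..k}. J l) g) (\<lambda>x. \<Sum>l=1..k. F l x)"
    using F_poly by (intro continuous_on_sum) (auto intro: continuous_on_poly_in)
  have cont2: "continuous_on (K_loc (I (Suc k)) (J (Suc k)) g) (F (Suc k))"
    using F_poly by (intro continuous_on_poly_in[of _ "I (Suc k)"]) simp
  have pos: "\<forall>x\<in>K_loc (\<Union>l\<in>{1..k}. I l) (\<Union>l\<in>{1..k}. J l) g. \<forall>z\<in>K_loc (I (Suc k)) (J (Suc k)) g.
      (\<forall>i\<in>(\<Union>l\<in>{1..k}. I l) \<inter> I (Suc k). x i = z i) \<longrightarrow> 0 < (\<Sum>l=1..k. F l x) + F (Suc k) z"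
  proof (intro ballI impI)
    fix x z
    assume x: "x \<in> K_loc (\<Union>l\<in>{1..k}. I l) (\<Union>l\<in>{1..k}. J l) g"
      and z: "z \<in> K_loc (I (Suc k)) (J (Suc k)) g" and xz: "\<forall>i\<in>(\<Union>l\<in>{1..k}. I l) \<inter> I (Suc k). x i = z i"
    define w where "w i = (if i \<in> A then x i else z i)" for i
    have "w \<in> K_loc (A \<union> I (Suc k)) ((\<Union>l\<in>{1..k}. J l) \<union> J (Suc k)) g"
      using K_loc_glue[OF x[folded A_def] z xz[folded A_def] g_A] g_loc unfolding w_def[abs_def] by simp
    then have "0 < (\<Sum>l=1..Suc k. F l w)"
      using F_pos by (simp add: A_def atLeastAtMostSuc_conv Un_commute)
    moreover have "(\<Sum>l=1..k. F l w) = (\<Sum>l=1..k. F l x)"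
      by (rule F_A) (simp add: w_def)
    moreover have "F (Suc k) w = F (Suc k) z"
      using F_poly xz by (intro poly_in_cong[of "F (Suc k)" "I (Suc k)"]) (auto simp: w_def A_def)
    ultimately show "0 < (\<Sum>l=1..k. F l x) + F (Suc k) z"
      by simp
  qed
  show ?thesis
    using poly_in_separation[OF compact1 compact2 cont1 cont2 pos] by simp
qed

theorem sparse_positive_decomposition:
  fixes k p :: nat
  assumes g_loc: "\<forall>l\<in>{1..p}. \<forall>j\<in>J l. g j \<in> poly_in (I l)"
    and RIP: "\<forall>l\<in>{1..p-1}. \<exists>s\<in>{1..l}. I (l+1) \<inter> (\<Union>r\<in>{1..l}. I r) \<subseteq> I s"
    and K_compact: "\<forall>l\<in>{1..p}. compact (K_loc (I l) (J l) g)"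
    and k: "1 \<le> k" "k \<le> p"
    and F_poly: "\<forall>l\<in>{1..k}. F l \<in> poly_in (I l)"
    and F_pos: "\<forall>x\<in>K_loc (\<Union>l\<in>{1..k}. I l) (\<Union>l\<in>{1..k}. J l) g. 0 < (\<Sum>l=1..k. F l x)"
  shows "\<exists>F'. (\<forall>l\<in>{1..k}. F' l \<in> poly_in (I l)) \<and> (\<forall>x. (\<Sum>l=1..k. F' l x) = (\<Sum>l=1..k. F l x)) \<and>
           (\<forall>l\<in>{1..k}. \<forall>x\<in>K_loc (I l) (J l) g. 0 < F' l x)"
  using k F_poly F_pos
proof (induction k arbitrary: F rule: nat_induct_at_least)
  case base
  then show ?case
    by (intro exI[of _ F]) simp
next
  case (Suc k)
  obtain h where h: "h \<in> poly_in ((\<Union>l\<in>{1..k}. I l) \<inter> I (Suc k))"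
    "\<forall>x\<in>K_loc (\<Union>l\<in>{1..k}. I l) (\<Union>l\<in>{1..k}. J l) g. 0 < (\<Sum>l=1..k. F l x) - h x"
    "\<forall>z\<in>K_loc (I (Suc k)) (J (Suc k)) g. 0 < F (Suc k) z + h z"
    using positive_sum_transfer[of k J g I F] g_loc K_compact Suc.prems by auto
  have "k \<in> {1..p-1}"
    using Suc.hyps Suc.prems(1) by simp
  then obtain s where s: "s \<in> {1..k}" "I (Suc k) \<inter> (\<Union>r\<in>{1..k}. I r) \<subseteq> I s"
    using RIP by (metis Suc_eq_plus1)
  have h_s: "h \<in> poly_in (I s)" and h_Suc: "h \<in> poly_in (I (Suc k))"
    using h(1) s(2) poly_in_mono by blast+
  define G where "G = F(s := \<lambda>x. F s x - h x)"
  have G_sum: "(\<Sum>l=1..k. G l x) = (\<Sum>l=1..k. F l x) - h x" for x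
  proof -
    have "(\<Sum>l=1..k. G l x) = (\<Sum>l=1..k. F l x - (if l = s then h x else 0))"
      by (rule sum.cong) (auto simp: G_def)
    also have "\<dots> = (\<Sum>l=1..k. F l x) - h x"
      using s(1) by (simp add: sum_subtractf)
    finally show ?thesis .
  qed
  have G_poly: "\<forall>l\<in>{1..k}. G l \<in> poly_in (I l)"
    using Suc.prems(2) h_s by (auto simp: G_def poly_in_def intro: alg_gen_diff)
  have G_pos: "\<forall>x\<in>K_loc (\<Union>l\<in>{1..k}. I l) (\<Union>l\<in>{1..k}. J l) g. 0 < (\<Sum>l=1..k. G l x)"
    using h(2) G_sum by simp
  obtain G' where G': "\<forall>l\<in>{1..k}. G' l \<in> poly_in (I l)" "\<forall>x. (\<Sum>l=1..k. G' l x) = (\<Sum>l=1..k. G l x)"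
    "\<forall>l\<in>{1..k}. \<forall>x\<in>K_loc (I l) (J l) g. 0 < G' l x"
    using Suc.IH[OF Suc_leD[OF Suc.prems(1)] G_poly G_pos] by blast
  define F' where "F' = G'(Suc k := \<lambda>x. F (Suc k) x + h x)"
  have "\<forall>l\<in>{1..Suc k}. F' l \<in> poly_in (I l)"
    using G'(1) Suc.prems(2) h_Suc by (auto simp: F'_def poly_in_def le_Suc_eq intro: alg_gen.add)
  moreover have "(\<Sum>l=1..Suc k. F' l x) = (\<Sum>l=1..Suc k. F l x)" for x
    using G'(2) G_sum by (simp add: F'_def)
  moreover have "\<forall>l\<in>{1..Suc k}. \<forall>x\<in>K_loc (I l) (J l) g. 0 < F' l x"
    using G'(3) h(3) by (auto simp: F'_def le_Suc_eq)
  ultimately show ?case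
    by blast
qed

theorem mainTheorem1:
  fixes n m p :: nat
    and f :: "pt \<Rightarrow> real"
    and g :: "nat \<Rightarrow> pt \<Rightarrow> real"
    and I J :: "nat \<Rightarrow> nat set"
  assumes p_pos: "p \<ge> 1"
    and I_sub: "\<forall>l\<in>{1..p}. I l \<subseteq> {1..n}"
    and J_sub: "\<forall>l\<in>{1..p}. J l \<subseteq> {1..m}"
    and f_split: "\<exists>F. (\<forall>l\<in>{1..p}. F l \<in> poly_in (I l)) \<and> f = (\<lambda>x. \<Sum>l=1..p. F l x)"
    and g_loc: "\<forall>l\<in>{1..p}. \<forall>j\<in>J l. g j \<in> poly_in (I l)"
    and I_cover: "(\<Union>l\<in>{1..p}. I l) = {1..n}"
    and J_cover: "(\<Union>l\<in>{1..p}. J l) = {1..m}"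
    and RIP: "\<forall>l\<in>{1..p-1}. \<exists>s\<in>{1..l}. I (l+1) \<inter> (\<Union>r\<in>{1..l}. I r) \<subseteq> I s"
    and K_compact: "\<forall>l\<in>{1..p}. compact (K_loc (I l) (J l) g)"
    and generation: "\<forall>l\<in>{1..p}. poly_in (I l) \<subseteq> alg_gen (g ` J l)"
    and f_pos: "\<forall>x\<in>K_glob n m g. f x > 0"
  shows "\<exists>F :: nat \<Rightarrow> pt \<Rightarrow> real. \<exists>c :: nat \<Rightarrow> (nat \<Rightarrow> nat) \<times> (nat \<Rightarrow> nat) \<Rightarrow> real.
           (\<forall>l\<in>{1..p}. F l \<in> poly_in (I l)) \<and>
           f = (\<lambda>x. \<Sum>l=1..p. F l x) \<and>
           (\<forall>l\<in>{1..p}. \<exists>S. finite S \<and> S \<subseteq> N_set (J l) \<and> (\<forall>ab\<in>S. c l ab > 0) \<and>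
               F l = (\<lambda>x. \<Sum>ab\<in>S. c l ab * h_ab m g (fst ab) (snd ab) x))"
proof -
  obtain F0 where F0: "\<forall>l\<in>{1..p}. F0 l \<in> poly_in (I l)" "f = (\<lambda>x. \<Sum>l=1..p. F0 l x)"
    using f_split by blast
  have "K_glob n m g = K_loc (\<Union>l\<in>{1..p}. I l) (\<Union>l\<in>{1..p}. J l) g"
    unfolding I_cover J_cover K_glob_def K_loc_def ..
  then obtain F where F: "\<forall>l\<in>{1..p}. F l \<in> poly_in (I l)" "f = (\<lambda>x. \<Sum>l=1..p. F l x)"
    "\<forall>l\<in>{1..p}. \<forall>x\<in>K_loc (I l) (J l) g. 0 < F l x"
    using sparse_positive_decomposition[OF g_loc RIP K_compact p_pos order_refl F0(1)] f_pos F0(2) by auto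
  have "\<forall>l\<in>{1..p}. \<exists>c. h_repr m g (J l) c (F l)"
    using J_sub g_loc generation F(1,3) by (intro ballI local_Handelman) auto
  from bchoice[OF this] obtain c where "\<forall>l\<in>{1..p}. h_repr m g (J l) (c l) (F l)"
    by blast
  then show ?thesis
    using F(1,2) unfolding h_repr_def by blast
qed

end
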